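(* For integers $n\ge 0$ and $k$, let $C_{n,k}^{(3)}=\binom{2n}{3n+k}_3-\binom{2n}{3n+k+1}_3$ if $0\le k\le 3n$, and $C_{n,k}^{(3)}=0$ otherwise (so $C_{0,0}^{(3)}=1$). Then for all $n\ge 0$: \begin{align*} C_{n+1,0}^{(3)} &= C_{n,0}^{(3)}+C_{n,1}^{(3)}+C_{n,2}^{(3)}+C_{n,3}^{(3)},\\ C_{n+1,1}^{(3)} &= C_{n,0}^{(3)}+3C_{n,1}^{(3)}+3C_{n,2}^{(3)}+2C_{n,3}^{(3)}+C_{n,4}^{(3)},\\ C_{n+1,2}^{(3)} &= C_{n,0}^{(3)}+3C_{n,1}^{(3)}+4C_{n,2}^{(3)}+3C_{n,3}^{(3)}+2C_{n,4}^{(3)}+C_{n,5}^{(3)}, \end{align*} and, for every $k\ge 3$, $$C_{n+1,k}^{(3)} = C_{n,k-3}^{(3)}+2C_{n,k-2}^{(3)}+3C_{n,k-1}^{(3)}+4C_{n,k}^{(3)}+3C_{n,k+1}^{(3)}+2C_{n,k+2}^{(3)}+C_{n,k+3}^{(3)}.$$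
   Context: For integers $s\ge1$, $n\ge0$, the bi$^s$nomial coefficients $\binom{n}{k}_s$ are defined by $(1+x+\cdots+x^s)^n=\sum_{k\in\mathbb Z}\binom{n}{k}_s x^k$, with $\binom{n}{k}_s=0$ for $k<0$ or $k>sn$. Here $s=3$ (quadrinomial coefficients). The numbers $C_{n,k}^{(3)}$ are called the coefficients of the three-Catalan triangle. *)

theory Defs
  imports "HOL-Computational_Algebra.Polynomial"
begin

definition binoms :: "nat \<Rightarrow> nat \<Rightarrow> int \<Rightarrow> int" where
  "binoms s n k = (if k < 0 then 0
                   else coeff ((\<Sum>i\<le>s. monom (1::int) i) ^ n) (nat k))"

definition C3 :: "nat \<Rightarrow> int \<Rightarrow> int" where
  "C3 n k = (if 0 \<le> k \<and> k \<le> 3 * int n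
             then binoms 3 (2*n) (3 * int n + k) - binoms 3 (2*n) (3 * int n + k + 1)
             else 0)"

end

(*
  Squaring the quadrinomial, (1 + x + x^2 + x^3)^2 = 1 + 2x + 3x^2 + 4x^3 + 3x^4 + 2x^5 + x^6,
  so the row-(2n+2) coefficients are a convolution of the row-2n ones with 1,2,3,4,3,2,1, and the
  same holds for the differences D_n(k) = binom(2n, 3n+k)_3 - binom(2n, 3n+k+1)_3 taken for all
  integers k. For k >= 0 these differences are the C_{n,k}^(3). The palindromic symmetry of the
  coefficients makes D_n antisymmetric, D_n(-k-1) = -D_n(k), which folds the terms with negative
  index back onto C_{n,0}, C_{n,1}, C_{n,2} and produces the three exceptional rows k = 0, 1, 2.
*)
theory Submission
  imports Defs
begin

lemma coeff_sum_monom_one_mult: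
  fixes p :: "'a::comm_semiring_1 poly"
  shows "coeff ((\<Sum>i\<le>s. monom 1 i) * p) j = (\<Sum>i\<le>s. if i \<le> j then coeff p (j - i) else 0)"
  unfolding sum_distrib_right coeff_sum coeff_monom_mult by (rule sum.cong) auto

lemma binoms_neg: "k < 0 \<Longrightarrow> binoms s n k = 0"
  by (simp add: binoms_def)

lemma binoms_0: "binoms s 0 k = (if k = 0 then 1 else 0)"
  by (auto simp: binoms_def)

lemma binoms_Suc: "binoms s (Suc n) k = (\<Sum>i\<le>s. binoms s n (k - int i))"
proof (cases "k < 0")
  case True
  then show ?thesis by (simp add: binoms_neg)
next
  case False
  then have "binoms s n (k - int i) =
      (if i \<le> nat k then coeff ((\<Sum>i\<le>s. monom 1 i) ^ n) (nat k - i) else 0)" for i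
    by (auto simp: binoms_def nat_diff_distrib)
  with False show ?thesis
    by (simp add: binoms_def coeff_sum_monom_one_mult)
qed

lemma binoms_eq_0_above: "k > int s * int n \<Longrightarrow> binoms s n k = 0"
proof (induction n arbitrary: k)
  case 0
  then show ?case by (simp add: binoms_0)
next
  case (Suc n)
  have "k - int i > int s * int n" if "i \<le> s" for i
    using Suc.prems that by (simp add: algebra_simps)
  then show ?case by (simp add: binoms_Suc Suc.IH)
qed

lemma binoms_symmetric: "binoms s n (int s * int n - k) = binoms s n k"
proof (induction n arbitrary: k)
  case 0
  then show ?case by (simp add: binoms_0)
next
  case (Suc n)
  have "binoms s (Suc n) (int s * int (Suc n) - k) =
      (\<Sum>i\<le>s. binoms s n (int s * int n - (k - int (s - i))))"
    by (simp add: binoms_Suc algebra_simps of_nat_diff)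
  also have "\<dots> = (\<Sum>i\<le>s. binoms s n (k - int (s - i)))"
    by (simp only: Suc.IH)
  also have "\<dots> = (\<Sum>i\<le>s. binoms s n (k - int i))"
    using sum.atLeastAtMost_rev[of "\<lambda>i. binoms s n (k - int i)" 0 s]
    by (simp add: atLeast0AtMost)
  finally show ?case by (simp add: binoms_Suc)
qed

lemma binoms3_Suc:
  "binoms 3 (Suc n) k = binoms 3 n k + binoms 3 n (k - 1) + binoms 3 n (k - 2) + binoms 3 n (k - 3)"
  by (simp add: binoms_Suc numeral_3_eq_3 atMost_Suc algebra_simps)

lemma binoms3_Suc_Suc:
  "binoms 3 (Suc (Suc n)) k = binoms 3 n k + 2 * binoms 3 n (k - 1) + 3 * binoms 3 n (k - 2)
     + 4 * binoms 3 n (k - 3) + 3 * binoms 3 n (k - 4) + 2 * binoms 3 n (k - 5) + binoms 3 n (k - 6)"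
  by (simp add: binoms3_Suc algebra_simps)

definition C3_diff :: "nat \<Rightarrow> int \<Rightarrow> int" where
  "C3_diff n k = binoms 3 (2 * n) (3 * int n + k) - binoms 3 (2 * n) (3 * int n + k + 1)"

lemma C3_eq_C3_diff: "0 \<le> k \<Longrightarrow> C3 n k = C3_diff n k"
  by (auto simp: C3_def C3_diff_def binoms_eq_0_above)

lemma C3_diff_reflect: "C3_diff n (- k - 1) = - C3_diff n k"
  using binoms_symmetric[of 3 "2 * n" "3 * int n + k"]
    binoms_symmetric[of 3 "2 * n" "3 * int n + k + 1"]
  by (simp add: C3_diff_def algebra_simps)

lemma C3_diff_Suc:
  "C3_diff (Suc n) k = C3_diff n (k - 3) + 2 * C3_diff n (k - 2) + 3 * C3_diff n (k - 1)
     + 4 * C3_diff n k + 3 * C3_diff n (k + 1) + 2 * C3_diff n (k + 2) + C3_diff n (k + 3)"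
proof -
  have "C3_diff (Suc n) k = binoms 3 (Suc (Suc (2 * n))) (3 * int n + k + 3)
      - binoms 3 (Suc (Suc (2 * n))) (3 * int n + k + 4)"
    by (simp add: C3_diff_def algebra_simps)
  then show ?thesis
    by (simp add: binoms3_Suc_Suc C3_diff_def algebra_simps)
qed

theorem proposition2p2:
  fixes n :: nat
  shows "C3 (n+1) 0 = C3 n 0 + C3 n 1 + C3 n 2 + C3 n 3
    \<and> C3 (n+1) 1 = C3 n 0 + 3 * C3 n 1 + 3 * C3 n 2 + 2 * C3 n 3 + C3 n 4
    \<and> C3 (n+1) 2 = C3 n 0 + 3 * C3 n 1 + 4 * C3 n 2 + 3 * C3 n 3 + 2 * C3 n 4 + C3 n 5
    \<and> (\<forall>k::int. k \<ge> 3 \<longrightarrow> C3 (n+1) k = C3 n (k-3) + 2 * C3 n (k-2) + 3 * C3 n (k-1)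
           + 4 * C3 n k + 3 * C3 n (k+1) + 2 * C3 n (k+2) + C3 n (k+3))"
proof -
  have negative_indices: "C3_diff n (-1) = - C3_diff n 0" "C3_diff n (-2) = - C3_diff n 1"
    "C3_diff n (-3) = - C3_diff n 2"
    using C3_diff_reflect[of n 0] C3_diff_reflect[of n 1] C3_diff_reflect[of n 2] by simp_all
  have "C3 (n+1) k = C3_diff n (k - 3) + 2 * C3_diff n (k - 2) + 3 * C3_diff n (k - 1)
     + 4 * C3_diff n k + 3 * C3_diff n (k + 1) + 2 * C3_diff n (k + 2) + C3_diff n (k + 3)"
    if "0 \<le> k" for k
    using that by (simp add: C3_eq_C3_diff C3_diff_Suc)
  then show ?thesis
    by (simp add: C3_eq_C3_diff negative_indices)
qed

end
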